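(* Let $Q$ be an automorphic loop satisfying condition (C) (for all $a,b\in Q$: $a(ab)=(ba)a$ if and only if $ab=ba$), and let $x,y\in Q$. If $x(xy)=(yx)x$, then the subloop $\langle x,y\rangle$ generated by $x$ and $y$ is commutative.
   Context: A loop is a set with a binary operation in which all equations $ax=b$, $ya=b$ are uniquely solvable and which has a two-sided identity. For $a\in L$, $R_a:x\mapsto xa$, $L_a:x\mapsto ax$; the inner mapping group is the stabilizer of the identity in the group generated by all $R_a,L_a$. A loop is automorphic if every inner mapping is an automorphism. The subloop generated by a subset $S$ is the intersection of all subloops containing $S$. *)

theory Defs
  imports Main
begin

definition loop :: "'a set \<Rightarrow> ('a \<Rightarrow> 'a \<Rightarrow> 'a) \<Rightarrow> 'a \<Rightarrow> bool" where
  "loop Q m e \<longleftrightarrow> e \<in> Q \<and> (\<forall>a\<in>Q. \<forall>b\<in>Q. m a b \<in> Q)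
     \<and> (\<forall>a\<in>Q. m e a = a \<and> m a e = a)
     \<and> (\<forall>a\<in>Q. \<forall>b\<in>Q. \<exists>!x. x \<in> Q \<and> m a x = b)
     \<and> (\<forall>a\<in>Q. \<forall>b\<in>Q. \<exists>!y. y \<in> Q \<and> m y a = b)"

text \<open>Left and right translations as permutations of Q (identity outside Q).\<close>
definition Lmap :: "'a set \<Rightarrow> ('a \<Rightarrow> 'a \<Rightarrow> 'a) \<Rightarrow> 'a \<Rightarrow> 'a \<Rightarrow> 'a" where
  "Lmap Q m a = (\<lambda>x. if x \<in> Q then m a x else x)"

definition Rmap :: "'a set \<Rightarrow> ('a \<Rightarrow> 'a \<Rightarrow> 'a) \<Rightarrow> 'a \<Rightarrow> 'a \<Rightarrow> 'a" where
  "Rmap Q m a = (\<lambda>x. if x \<in> Q then m x a else x)"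

definition perm_inv :: "'a set \<Rightarrow> ('a \<Rightarrow> 'a) \<Rightarrow> 'a \<Rightarrow> 'a" where
  "perm_inv Q f = (\<lambda>x. if x \<in> Q then inv_into Q f x else x)"

inductive_set Mlt :: "'a set \<Rightarrow> ('a \<Rightarrow> 'a \<Rightarrow> 'a) \<Rightarrow> ('a \<Rightarrow> 'a) set"
  for Q m where
  Mlt_id: "id \<in> Mlt Q m"
| Mlt_L: "\<lbrakk>f \<in> Mlt Q m; a \<in> Q\<rbrakk> \<Longrightarrow> Lmap Q m a \<circ> f \<in> Mlt Q m"
| Mlt_R: "\<lbrakk>f \<in> Mlt Q m; a \<in> Q\<rbrakk> \<Longrightarrow> Rmap Q m a \<circ> f \<in> Mlt Q m"
| Mlt_Linv: "\<lbrakk>f \<in> Mlt Q m; a \<in> Q\<rbrakk> \<Longrightarrow> perm_inv Q (Lmap Q m a) \<circ> f \<in> Mlt Q m"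
| Mlt_Rinv: "\<lbrakk>f \<in> Mlt Q m; a \<in> Q\<rbrakk> \<Longrightarrow> perm_inv Q (Rmap Q m a) \<circ> f \<in> Mlt Q m"

definition Inn :: "'a set \<Rightarrow> ('a \<Rightarrow> 'a \<Rightarrow> 'a) \<Rightarrow> 'a \<Rightarrow> ('a \<Rightarrow> 'a) set" where
  "Inn Q m e = {f \<in> Mlt Q m. f e = e}"

definition automorphic_loop :: "'a set \<Rightarrow> ('a \<Rightarrow> 'a \<Rightarrow> 'a) \<Rightarrow> 'a \<Rightarrow> bool" where
  "automorphic_loop Q m e \<longleftrightarrow> loop Q m e \<and>
     (\<forall>f \<in> Inn Q m e. bij_betw f Q Q \<and> (\<forall>x\<in>Q. \<forall>y\<in>Q. f (m x y) = m (f x) (f y)))"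

definition subloop :: "'a set \<Rightarrow> 'a set \<Rightarrow> ('a \<Rightarrow> 'a \<Rightarrow> 'a) \<Rightarrow> bool" where
  "subloop H Q m \<longleftrightarrow> H \<subseteq> Q \<and> (\<exists>u. loop H m u)"

definition gen_subloop :: "'a set \<Rightarrow> ('a \<Rightarrow> 'a \<Rightarrow> 'a) \<Rightarrow> 'a set \<Rightarrow> 'a set" where
  "gen_subloop Q m S = \<Inter>{H. subloop H Q m \<and> S \<subseteq> H}"

end

theory Submission
  imports Defs
begin

text \<open>
  In an automorphic loop the inner mapping \<open>R\<^sub>a\<^sup>-\<^sup>1 L\<^sub>a\<close> is an automorphism
  whose fixed points are exactly the elements commuting with a, so the
  centralizer C(a) of every element is a subloop. Condition (C) turns
  \<open>x(xy) = (yx)x\<close> into \<open>xy = yx\<close>, so \<open>\<langle>x,y\<rangle> \<subseteq> C(x) \<inter> C(y)\<close>. Thus every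
  a in \<open>\<langle>x,y\<rangle>\<close> commutes with x and y, whence \<open>\<langle>x,y\<rangle> \<subseteq> C(a)\<close>.
\<close>

definition centralizer :: "'a set \<Rightarrow> ('a \<Rightarrow> 'a \<Rightarrow> 'a) \<Rightarrow> 'a \<Rightarrow> 'a set" where
  "centralizer Q m a = {b \<in> Q. m a b = m b a}"

lemma ex1_fixed_solution:
  assumes ex1: "\<exists>!x. x \<in> Q \<and> P x" and "\<forall>x\<in>Q. f x \<in> Q" and "\<forall>x\<in>Q. P x \<longrightarrow> P (f x)"
  shows "\<exists>!x. x \<in> {b \<in> Q. f b = b} \<and> P x"
proof -
  obtain z where z: "z \<in> Q" "P z" and unique: "\<And>w. w \<in> Q \<Longrightarrow> P w \<Longrightarrow> w = z"
    using ex1 by blast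
  have "f z = z" using assms(2,3) z unique by blast
  then show ?thesis using z unique by blast
qed

lemma loop_fixed_points:
  assumes L: "loop Q m e" and fQ: "\<forall>x\<in>Q. f x \<in> Q"
    and hom: "\<forall>x\<in>Q. \<forall>y\<in>Q. f (m x y) = m (f x) (f y)" and fe: "f e = e"
  shows "loop {b \<in> Q. f b = b} m e"
proof -
  let ?F = "{b \<in> Q. f b = b}"
  have eQ: "e \<in> Q" and closed: "\<forall>a\<in>Q. \<forall>b\<in>Q. m a b \<in> Q"
    and unit: "\<forall>a\<in>Q. m e a = a \<and> m a e = a"
    and left_div: "\<forall>a\<in>Q. \<forall>b\<in>Q. \<exists>!x. x \<in> Q \<and> m a x = b"
    and right_div: "\<forall>a\<in>Q. \<forall>b\<in>Q. \<exists>!y. y \<in> Q \<and> m y a = b"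
    using L unfolding loop_def by auto
  have left_div_F: "\<exists>!x. x \<in> ?F \<and> m a x = b"
    and right_div_F: "\<exists>!x. x \<in> ?F \<and> m x a = b"
    if "a \<in> ?F" "b \<in> ?F" for a b
  proof -
    have a: "a \<in> Q" "f a = a" and b: "b \<in> Q" "f b = b" using that by auto
    have "m a (f x) = f (m a x)" "m (f x) a = f (m x a)" if "x \<in> Q" for x
      using hom a that by simp_all
    then have "\<forall>x\<in>Q. m a x = b \<longrightarrow> m a (f x) = b" "\<forall>x\<in>Q. m x a = b \<longrightarrow> m (f x) a = b"
      using b by simp_all
    then show "\<exists>!x. x \<in> ?F \<and> m a x = b" "\<exists>!x. x \<in> ?F \<and> m x a = b"
      using ex1_fixed_solution[OF left_div[rule_format, OF a(1) b(1)] fQ]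
        ex1_fixed_solution[OF right_div[rule_format, OF a(1) b(1)] fQ] by simp_all
  qed
  have "\<forall>a\<in>?F. \<forall>b\<in>?F. m a b \<in> ?F" using closed hom by simp
  then show ?thesis
    unfolding loop_def using eQ fe unit left_div_F right_div_F by simp
qed

lemma Rinv_L_in_Mlt:
  assumes "a \<in> Q"
  shows "perm_inv Q (Rmap Q m a) \<circ> Lmap Q m a \<in> Mlt Q m"
  using Mlt_Rinv[OF Mlt_L[OF Mlt_id assms] assms] by simp

lemma Rinv_L_fixed_iff_commute:
  assumes L: "loop Q m e" and a: "a \<in> Q" and b: "b \<in> Q"
  shows "(perm_inv Q (Rmap Q m a) \<circ> Lmap Q m a) b = b \<longleftrightarrow> m a b = m b a"
proof -
  let ?R = "Rmap Q m a"
  have closed: "\<forall>u\<in>Q. \<forall>v\<in>Q. m u v \<in> Q"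
    and right_div: "\<forall>u\<in>Q. \<forall>v\<in>Q. \<exists>!w. w \<in> Q \<and> m w u = v"
    using L unfolding loop_def by auto
  have abQ: "m a b \<in> Q" using closed a b by blast
  have inj: "inj_on ?R Q"
  proof (rule inj_onI)
    fix u v assume "u \<in> Q" "v \<in> Q" "?R u = ?R v"
    then have "m u a = m v a" "m u a \<in> Q" using closed a by (auto simp: Rmap_def)
    then show "u = v" using right_div a \<open>u \<in> Q\<close> \<open>v \<in> Q\<close> by metis
  qed
  obtain c where "c \<in> Q" "m a b = ?R c"
  proof -
    obtain c where "c \<in> Q" "m c a = m a b" using right_div a abQ by metis
    then show ?thesis using that by (simp add: Rmap_def)
  qed
  then have "inv_into Q ?R (m a b) = b \<longleftrightarrow> m a b = ?R b"
    using inj b by (simp add: inv_into_f_f inj_on_eq_iff)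
  moreover have "(perm_inv Q ?R \<circ> Lmap Q m a) b = inv_into Q ?R (m a b)"
    using abQ b by (simp add: perm_inv_def Lmap_def)
  moreover have "?R b = m b a" using b by (simp add: Rmap_def)
  ultimately show ?thesis by simp
qed

lemma centralizer_subloop:
  assumes A: "automorphic_loop Q m e" and a: "a \<in> Q"
  shows "subloop (centralizer Q m a) Q m"
proof -
  define T where "T = perm_inv Q (Rmap Q m a) \<circ> Lmap Q m a"
  have L: "loop Q m e" using A unfolding automorphic_loop_def by auto
  have fixed: "{b \<in> Q. T b = b} = centralizer Q m a"
    using Rinv_L_fixed_iff_commute[OF L a] unfolding T_def centralizer_def by auto
  have "T e = e"
    using Rinv_L_fixed_iff_commute[OF L a] L a unfolding T_def loop_def by auto
  then have "T \<in> Inn Q m e"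
    using Rinv_L_in_Mlt[OF a] unfolding Inn_def T_def by auto
  then have "bij_betw T Q Q" and hom: "\<forall>x\<in>Q. \<forall>y\<in>Q. T (m x y) = m (T x) (T y)"
    using A unfolding automorphic_loop_def by auto
  then have "\<forall>x\<in>Q. T x \<in> Q" using bij_betwE by blast
  from loop_fixed_points[OF L this hom \<open>T e = e\<close>]
  have "loop (centralizer Q m a) m e" unfolding fixed .
  then show ?thesis unfolding subloop_def centralizer_def by auto
qed

lemma gen_subloop_subset:
  assumes "subloop H Q m" and "S \<subseteq> H"
  shows "gen_subloop Q m S \<subseteq> H"
  using assms unfolding gen_subloop_def by auto

lemma gen_subloop_subset_carrier:
  assumes "loop Q m e" and "S \<subseteq> Q"
  shows "gen_subloop Q m S \<subseteq> Q"
  using assms by (intro gen_subloop_subset) (auto simp: subloop_def)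

lemma automorphic_loop_gen_subloop_commutative:
  assumes A: "automorphic_loop Q m e" and x: "x \<in> Q" and y: "y \<in> Q"
    and xy: "m x y = m y x"
  shows "\<forall>a\<in>gen_subloop Q m {x, y}. \<forall>b\<in>gen_subloop Q m {x, y}. m a b = m b a"
proof (intro ballI)
  let ?G = "gen_subloop Q m {x, y}"
  have G_centralizes: "?G \<subseteq> centralizer Q m a"
    if "a \<in> Q" "m a x = m x a" "m a y = m y a" for a
    using gen_subloop_subset[OF centralizer_subloop[OF A \<open>a \<in> Q\<close>]] that x y
    unfolding centralizer_def by simp
  have "?G \<subseteq> Q"
    using A x y by (intro gen_subloop_subset_carrier) (auto simp: automorphic_loop_def)
  fix a b assume a: "a \<in> ?G" and b: "b \<in> ?G"
  have "a \<in> Q" using a \<open>?G \<subseteq> Q\<close> by blast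
  have "?G \<subseteq> centralizer Q m x" "?G \<subseteq> centralizer Q m y"
    using G_centralizes x y xy by simp_all
  then have "m x a = m a x" "m y a = m a y" using a unfolding centralizer_def by auto
  then show "m a b = m b a"
    using G_centralizes[OF \<open>a \<in> Q\<close>] b unfolding centralizer_def by auto
qed

theorem lemma3p3:
  fixes Q :: "'a set" and m :: "'a \<Rightarrow> 'a \<Rightarrow> 'a" and e x y :: 'a
  assumes "automorphic_loop Q m e"
    and C: "\<forall>a\<in>Q. \<forall>b\<in>Q. m a (m a b) = m (m b a) a \<longleftrightarrow> m a b = m b a"
    and "x \<in> Q" and "y \<in> Q"
    and "m x (m x y) = m (m y x) x"
  shows "\<forall>a\<in>gen_subloop Q m {x, y}. \<forall>b\<in>gen_subloop Q m {x, y}. m a b = m b a"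
proof -
  have "m x y = m y x" using C[rule_format, OF \<open>x \<in> Q\<close> \<open>y \<in> Q\<close>] assms(5) by simp
  then show ?thesis
    using automorphic_loop_gen_subloop_commutative[OF assms(1,3,4)] by simp
qed

end
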